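(* Consider the linear program $\min\{c^\top x + \sum_{i=1}^t (d^i)^\top y^i : T^i x + Q^i y^i = h^i\ (i \in [t]),\ x \in X,\ y^i \in Y^i\ (i\in[t])\}$ and let $\mathcal{F}' := \{(x,\theta^1,\dots,\theta^t) : x \in X,\ (h^i - T^i x, \theta^i) \in \mathrm{epi}(f^i)\ \forall i \in [t]\}$. Let $\rho \in \mathbb{R}^n$ and $\rho_0^1,\dots,\rho_0^t \ge 0$, and assume $\sigma_{\mathcal{F}'}(\rho,\rho_0^1,\ldots,\rho_0^t)$ is finite. If $(\hat\alpha^1,\dots,\hat\alpha^t)$ is an optimal solution of $$\max_{\alpha^1,\dots,\alpha^t}\Big\{-\sum_{i\in[t]}(\alpha^i)^\top h^i + \sigma_X\Big(\rho + \sum_{i\in[t]}(T^i)^\top\alpha^i\Big) + \sum_{i\in[t]}\sigma_{Y^i}\big((Q^i)^\top\alpha^i + \rho_0^i d^i\big)\Big\},$$ then every $(x,\theta^1,\dots,\theta^t)$ with $x \in X$ satisfying the cuts $(\hat\alpha^i)^\top(h^i - T^i x) + \rho_0^i\theta^i \ge \sigma_{\mathrm{epi}(f^i)}(\hat\alpha^i,\rho_0^i)$ for all $i\in[t]$ also satisfies $\rho^\top x + \sum_{i\in[t]}\rho_0^i\theta^i \ge \sigma_{\mathcal{F}'}(\rho,\rho_0^1,\ldots,\rho_0^t)$.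
   Context: $X \subseteq \mathbb{R}^n$ and $Y^i \subseteq \mathbb{R}^{m_i}$ ($i \in [t]$) are nonempty polyhedra, $T^i \in \mathbb{R}^{p_i \times n}$, $Q^i \in \mathbb{R}^{p_i\times m_i}$, $h^i \in \mathbb{R}^{p_i}$, $d^i \in \mathbb{R}^{m_i}$. For each $i$, $f^i(w) := \inf\{(d^i)^\top y^i : Q^i y^i = w,\ y^i \in Y^i\}$ and $\mathrm{epi}(f^i) := \{(w,\theta) : \theta \ge f^i(w)\}$. For $\mathcal{X} \subseteq \mathbb{R}^k$, $\sigma_{\mathcal{X}}(\alpha) := \inf_{x \in \mathcal{X}}\alpha^\top x$; for sets of tuples the argument is the concatenated coefficient vector. *)

theory Defs
  imports "HOL-Analysis.Analysis" "HOL-Library.Extended_Real" "HOL-Library.Function_Algebras"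
begin

text \<open>Vectors of R^k are represented as functions nat => real vanishing outside {..<k};
  matrices in R^(p x m) as functions nat => nat => real (only entries r<p, j<m matter).\<close>

definition vecs :: "nat \<Rightarrow> (nat \<Rightarrow> real) set" where
  "vecs k = {x. \<forall>j\<ge>k. x j = 0}"

definition dotn :: "nat \<Rightarrow> (nat \<Rightarrow> real) \<Rightarrow> (nat \<Rightarrow> real) \<Rightarrow> real" where
  "dotn k a x = (\<Sum>j<k. a j * x j)"

definition mat_vec :: "nat \<Rightarrow> nat \<Rightarrow> (nat \<Rightarrow> nat \<Rightarrow> real) \<Rightarrow> (nat \<Rightarrow> real) \<Rightarrow> (nat \<Rightarrow> real)" where
  "mat_vec p m M y = (\<lambda>r. if r < p then (\<Sum>j<m. M r j * y j) else 0)"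

definition matT_vec :: "nat \<Rightarrow> nat \<Rightarrow> (nat \<Rightarrow> nat \<Rightarrow> real) \<Rightarrow> (nat \<Rightarrow> real) \<Rightarrow> (nat \<Rightarrow> real)" where
  "matT_vec p m M a = (\<lambda>j. if j < m then (\<Sum>r<p. M r j * a r) else 0)"

definition polyhedron :: "nat \<Rightarrow> (nat \<Rightarrow> real) set \<Rightarrow> bool" where
  "polyhedron k P \<longleftrightarrow> (\<exists>(q::nat) A b. P = {x \<in> vecs k. \<forall>r<q. dotn k (A r) x \<le> b r})"

definition sigma :: "nat \<Rightarrow> (nat \<Rightarrow> real) set \<Rightarrow> (nat \<Rightarrow> real) \<Rightarrow> ereal" where
  "sigma k S a = (INF x\<in>S. ereal (dotn k a x))"

definition valf :: "nat \<Rightarrow> nat \<Rightarrow> (nat \<Rightarrow> nat \<Rightarrow> real) \<Rightarrow> (nat \<Rightarrow> real) \<Rightarrow> (nat \<Rightarrow> real) set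
    \<Rightarrow> (nat \<Rightarrow> real) \<Rightarrow> ereal" where
  "valf p m Q d Y w = (INF y\<in>{y \<in> Y. mat_vec p m Q y = w}. ereal (dotn m d y))"

definition epi :: "nat \<Rightarrow> nat \<Rightarrow> (nat \<Rightarrow> nat \<Rightarrow> real) \<Rightarrow> (nat \<Rightarrow> real) \<Rightarrow> (nat \<Rightarrow> real) set
    \<Rightarrow> ((nat \<Rightarrow> real) \<times> real) set" where
  "epi p m Q d Y = {(w, \<theta>). w \<in> vecs p \<and> valf p m Q d Y w \<le> ereal \<theta>}"

definition sigma_epi :: "nat \<Rightarrow> ((nat \<Rightarrow> real) \<times> real) set \<Rightarrow> (nat \<Rightarrow> real) \<Rightarrow> real \<Rightarrow> ereal" where
  "sigma_epi p E a r0 = (INF z\<in>E. ereal (dotn p a (fst z) + r0 * snd z))"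

definition Fprime :: "nat \<Rightarrow> (nat \<Rightarrow> real) set \<Rightarrow> nat \<Rightarrow> (nat \<Rightarrow> nat) \<Rightarrow> (nat \<Rightarrow> nat)
    \<Rightarrow> (nat \<Rightarrow> nat \<Rightarrow> nat \<Rightarrow> real) \<Rightarrow> (nat \<Rightarrow> nat \<Rightarrow> nat \<Rightarrow> real) \<Rightarrow> (nat \<Rightarrow> nat \<Rightarrow> real)
    \<Rightarrow> (nat \<Rightarrow> nat \<Rightarrow> real) \<Rightarrow> (nat \<Rightarrow> (nat \<Rightarrow> real) set)
    \<Rightarrow> ((nat \<Rightarrow> real) \<times> (nat \<Rightarrow> real)) set" where
  "Fprime n X t p m T Q h d Y =
     {(x, \<theta>). x \<in> X \<and> \<theta> \<in> vecs t \<and>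
        (\<forall>i<t. (h i - mat_vec (p i) n (T i) x, \<theta> i) \<in> epi (p i) (m i) (Q i) (d i) (Y i))}"

definition sigma_F :: "nat \<Rightarrow> nat \<Rightarrow> ((nat \<Rightarrow> real) \<times> (nat \<Rightarrow> real)) set \<Rightarrow> (nat \<Rightarrow> real)
    \<Rightarrow> (nat \<Rightarrow> real) \<Rightarrow> ereal" where
  "sigma_F n t F \<rho> \<rho>0 = (INF z\<in>F. ereal (dotn n \<rho> (fst z) + (\<Sum>i<t. \<rho>0 i * snd z i)))"

definition dual_obj :: "nat \<Rightarrow> (nat \<Rightarrow> real) set \<Rightarrow> nat \<Rightarrow> (nat \<Rightarrow> nat) \<Rightarrow> (nat \<Rightarrow> nat)
    \<Rightarrow> (nat \<Rightarrow> nat \<Rightarrow> nat \<Rightarrow> real) \<Rightarrow> (nat \<Rightarrow> nat \<Rightarrow> nat \<Rightarrow> real) \<Rightarrow> (nat \<Rightarrow> nat \<Rightarrow> real)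
    \<Rightarrow> (nat \<Rightarrow> nat \<Rightarrow> real) \<Rightarrow> (nat \<Rightarrow> (nat \<Rightarrow> real) set)
    \<Rightarrow> (nat \<Rightarrow> real) \<Rightarrow> (nat \<Rightarrow> real) \<Rightarrow> (nat \<Rightarrow> nat \<Rightarrow> real) \<Rightarrow> ereal" where
  "dual_obj n X t p m T Q h d Y \<rho> \<rho>0 \<alpha> =
     ereal (- (\<Sum>i<t. dotn (p i) (\<alpha> i) (h i)))
     + sigma n X (\<rho> + (\<Sum>i<t. matT_vec (p i) n (T i) (\<alpha> i)))
     + (\<Sum>i<t. sigma (m i) (Y i) (matT_vec (p i) (m i) (Q i) (\<alpha> i) + (\<lambda>j. \<rho>0 i * d i j)))"

end

theory Submission
  imports Defs
begin

(*
  Weak duality: for every alpha, the dual objective is at most rho'x + sum_i rho0_i theta_i at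
  any x in X satisfying the cuts, because sigma_{Y^i}((Q^i)'alpha^i + rho0_i d^i) is at most
  sigma_{epi f^i}(alpha^i, rho0_i) when rho0_i >= 0.
  Strong duality: for every eps > 0 the linear system x in X, y^i in Y^i, T^i x + Q^i y^i = h^i,
  objective at most sigma_{F'} - eps, is infeasible, so Farkas' lemma (proved by Fourier-Motzkin
  elimination) yields multipliers alpha for the linking equations whose dual objective exceeds
  sigma_{F'} - eps. A dual optimum therefore has dual objective at least sigma_{F'}, and weak
  duality for it gives the theorem.
*)

section \<open>Farkas' lemma by Fourier-Motzkin elimination\<close>

definition lin_form :: "'j set \<Rightarrow> ('j \<Rightarrow> real) \<Rightarrow> ('j \<Rightarrow> real) \<Rightarrow> real" where
  "lin_form J a z = (\<Sum>j\<in>J. a j * z j)"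

lemma lin_form_zero_left [simp]: "lin_form J (\<lambda>_. 0) z = 0"
  by (simp add: lin_form_def)

lemma lin_form_add_left: "lin_form J (\<lambda>j. a j + a' j) z = lin_form J a z + lin_form J a' z"
  by (simp add: lin_form_def sum.distrib distrib_right)

lemma lin_form_scale_left: "lin_form J (\<lambda>j. c * a j) z = c * lin_form J a z"
  by (simp add: lin_form_def sum_distrib_left mult.assoc)

lemma lin_form_insert:
  "finite J \<Longrightarrow> j \<notin> J \<Longrightarrow> lin_form (insert j J) a z = a j * z j + lin_form J a z"
  by (simp add: lin_form_def)

lemma lin_form_fun_upd: "j \<notin> J \<Longrightarrow> lin_form J a (z(j := v)) = lin_form J a z"
  unfolding lin_form_def by (rule sum.cong) auto

inductive_set conic_hull :: "(('j \<Rightarrow> real) \<times> real) set \<Rightarrow> (('j \<Rightarrow> real) \<times> real) set"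
  for R where
  zero: "(\<lambda>_. 0, 0) \<in> conic_hull R"
| base: "r \<in> R \<Longrightarrow> r \<in> conic_hull R"
| add: "(a, b) \<in> conic_hull R \<Longrightarrow> (a', b') \<in> conic_hull R \<Longrightarrow> (\<lambda>j. a j + a' j, b + b') \<in> conic_hull R"
| scale: "(a, b) \<in> conic_hull R \<Longrightarrow> 0 \<le> c \<Longrightarrow> (\<lambda>j. c * a j, c * b) \<in> conic_hull R"

lemma conic_hull_minimal:
  assumes "R \<subseteq> C" and "(\<lambda>_. 0, 0) \<in> C"
    and "\<And>a b a' b'. (a, b) \<in> C \<Longrightarrow> (a', b') \<in> C \<Longrightarrow> (\<lambda>j. a j + a' j, b + b') \<in> C"
    and "\<And>a b c. (a, b) \<in> C \<Longrightarrow> 0 \<le> c \<Longrightarrow> (\<lambda>j. c * a j, c * b) \<in> C"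
  shows "conic_hull R \<subseteq> C"
proof
  fix r assume "r \<in> conic_hull R"
  then show "r \<in> C" by induct (use assms in auto)
qed

definition fm_combine :: "'j \<Rightarrow> ('j \<Rightarrow> real) \<times> real \<Rightarrow> ('j \<Rightarrow> real) \<times> real \<Rightarrow> ('j \<Rightarrow> real) \<times> real"
  where "fm_combine j0 p q =
    (\<lambda>j. - fst q j0 * fst p j + fst p j0 * fst q j, - fst q j0 * snd p + fst p j0 * snd q)"

definition fm_eliminate :: "'j \<Rightarrow> (('j \<Rightarrow> real) \<times> real) set \<Rightarrow> (('j \<Rightarrow> real) \<times> real) set"
  where "fm_eliminate j0 R = {r \<in> R. fst r j0 = 0} \<union>
    (\<lambda>(p, q). fm_combine j0 p q) ` ({r \<in> R. 0 < fst r j0} \<times> {r \<in> R. fst r j0 < 0})"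

lemma finite_fm_eliminate: "finite R \<Longrightarrow> finite (fm_eliminate j0 R)"
  by (simp add: fm_eliminate_def)

lemma lin_form_fm_combine:
  "lin_form J (fst (fm_combine j0 p q)) z = - fst q j0 * lin_form J (fst p) z + fst p j0 * lin_form J (fst q) z"
  unfolding fm_combine_def fst_conv lin_form_add_left lin_form_scale_left ..

lemma fm_eliminate_subset_conic_hull:
  "fm_eliminate j0 R \<subseteq> {(a, b). (a, b) \<in> conic_hull R \<and> a j0 = 0}"
proof
  fix r assume "r \<in> fm_eliminate j0 R"
  then consider "r \<in> R" "fst r j0 = 0"
    | p q where "p \<in> R" "0 < fst p j0" "q \<in> R" "fst q j0 < 0" "r = fm_combine j0 p q"
    by (auto simp: fm_eliminate_def)
  then show "r \<in> {(a, b). (a, b) \<in> conic_hull R \<and> a j0 = 0}"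
  proof cases
    case 1
    then show ?thesis by (auto intro: conic_hull.base)
  next
    case 2
    then have "p \<in> conic_hull R" "q \<in> conic_hull R" by (auto intro: conic_hull.base)
    then have "(\<lambda>j. - fst q j0 * fst p j, - fst q j0 * snd p) \<in> conic_hull R"
      and "(\<lambda>j. fst p j0 * fst q j, fst p j0 * snd q) \<in> conic_hull R"
      using 2 conic_hull.scale[of "fst p" "snd p" R "- fst q j0"]
        conic_hull.scale[of "fst q" "snd q" R "fst p j0"] by simp_all
    then have "r \<in> conic_hull R"
      unfolding \<open>r = fm_combine j0 p q\<close> fm_combine_def by (rule conic_hull.add)
    then show ?thesis using 2 by (auto simp: fm_combine_def)
  qed
qed

lemma exists_between_finite:
  fixes f g :: "'a \<Rightarrow> real"
  assumes "finite A" "finite B" "\<And>a b. a \<in> A \<Longrightarrow> b \<in> B \<Longrightarrow> f a \<le> g b"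
  shows "\<exists>v. (\<forall>a\<in>A. f a \<le> v) \<and> (\<forall>b\<in>B. v \<le> g b)"
proof (cases "A = {}")
  case True
  then show ?thesis using assms(2) by (intro exI[of _ "if B = {} then 0 else Min (g ` B)"]) auto
next
  case False
  then show ?thesis using assms by (intro exI[of _ "Max (f ` A)"]) auto
qed

lemma fm_eliminate_solution_extends:
  assumes "finite R" "finite J" "j0 \<notin> J"
    and sol: "\<forall>r\<in>fm_eliminate j0 R. lin_form J (fst r) z \<le> snd r"
  shows "\<exists>v. \<forall>r\<in>R. lin_form (insert j0 J) (fst r) (z(j0 := v)) \<le> snd r"
proof -
  define s where "s r = (snd r - lin_form J (fst r) z) / fst r j0" for r
  have "s q \<le> s p" if p: "p \<in> R" "0 < fst p j0" and q: "q \<in> R" "fst q j0 < 0" for p q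
  proof -
    have "fm_combine j0 p q \<in> fm_eliminate j0 R"
      using p q unfolding fm_eliminate_def by blast
    then have "lin_form J (fst (fm_combine j0 p q)) z \<le> snd (fm_combine j0 p q)"
      using sol by blast
    then have "- fst q j0 * lin_form J (fst p) z + fst p j0 * lin_form J (fst q) z
        \<le> - fst q j0 * snd p + fst p j0 * snd q"
      unfolding lin_form_fm_combine by (simp add: fm_combine_def)
    then show ?thesis using p(2) q(2) by (simp add: s_def divide_simps algebra_simps)
  qed
  then obtain v where lower: "\<forall>q\<in>{q \<in> R. fst q j0 < 0}. s q \<le> v"
    and upper: "\<forall>p\<in>{p \<in> R. 0 < fst p j0}. v \<le> s p"
    using exists_between_finite[of "{q \<in> R. fst q j0 < 0}" "{p \<in> R. 0 < fst p j0}" s s]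
      \<open>finite R\<close> by auto
  have "lin_form (insert j0 J) (fst r) (z(j0 := v)) \<le> snd r" if r: "r \<in> R" for r
  proof -
    have "lin_form (insert j0 J) (fst r) (z(j0 := v)) = fst r j0 * v + lin_form J (fst r) z"
      using assms(2,3) by (simp add: lin_form_insert lin_form_fun_upd)
    moreover consider "fst r j0 = 0" | "0 < fst r j0" | "fst r j0 < 0" by linarith
    then have "fst r j0 * v + lin_form J (fst r) z \<le> snd r"
    proof cases
      case 1
      then show ?thesis using r sol unfolding fm_eliminate_def by auto
    next
      case 2
      with upper r have "v \<le> s r" by blast
      then have "fst r j0 * v \<le> fst r j0 * s r" using 2 by simp
      then show ?thesis using 2 by (simp add: s_def)
    next
      case 3
      with lower r have "s r \<le> v" by blast
      then have "fst r j0 * v \<le> fst r j0 * s r" using 3 by (simp add: mult_left_mono_neg)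
      then show ?thesis using 3 by (simp add: s_def)
    qed
    ultimately show ?thesis by simp
  qed
  then show ?thesis by blast
qed

theorem farkas_fourier_motzkin:
  assumes "finite J" "finite R" "\<not> (\<exists>z. \<forall>r\<in>R. lin_form J (fst r) z \<le> snd r)"
  shows "\<exists>a b. (a, b) \<in> conic_hull R \<and> (\<forall>j\<in>J. a j = 0) \<and> b < 0"
  using assms
proof (induction J arbitrary: R rule: finite_induct)
  case empty
  then obtain r where "r \<in> R" "snd r < 0" by (force simp: lin_form_def)
  then show ?case by (metis conic_hull.base prod.collapse empty_iff)
next
  case (insert j0 J)
  have "\<not> (\<exists>z. \<forall>r\<in>fm_eliminate j0 R. lin_form J (fst r) z \<le> snd r)"
    using fm_eliminate_solution_extends[OF insert.prems(1) insert.hyps] insert.prems(2) by blast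
  then obtain a b where ab: "(a, b) \<in> conic_hull (fm_eliminate j0 R)" "\<forall>j\<in>J. a j = 0" "b < 0"
    using insert.IH finite_fm_eliminate[OF insert.prems(1)] by blast
  have "conic_hull (fm_eliminate j0 R) \<subseteq> {(a, b). (a, b) \<in> conic_hull R \<and> a j0 = 0}"
  proof (rule conic_hull_minimal[OF fm_eliminate_subset_conic_hull])
    fix a b a' b'
    assume "(a, b) \<in> {(a, b). (a, b) \<in> conic_hull R \<and> a j0 = 0}"
    moreover assume "(a', b') \<in> {(a, b). (a, b) \<in> conic_hull R \<and> a j0 = 0}"
    ultimately show "(\<lambda>j. a j + a' j, b + b') \<in> {(a, b). (a, b) \<in> conic_hull R \<and> a j0 = 0}"
      by (simp add: conic_hull.add)
  next
    fix a b and c :: real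
    assume "(a, b) \<in> {(a, b). (a, b) \<in> conic_hull R \<and> a j0 = 0}" "0 \<le> c"
    then show "(\<lambda>j. c * a j, c * b) \<in> {(a, b). (a, b) \<in> conic_hull R \<and> a j0 = 0}"
      by (simp add: conic_hull.scale)
  qed (simp add: conic_hull.zero)
  then show ?case using ab by blast
qed

section \<open>Lagrangian relaxation of linear equality constraints\<close>

definition sublevel_system :: "(('j \<Rightarrow> real) \<times> real) set \<Rightarrow> 's set \<Rightarrow> ('s \<Rightarrow> 'j \<Rightarrow> real)
    \<Rightarrow> ('s \<Rightarrow> real) \<Rightarrow> ('j \<Rightarrow> real) \<Rightarrow> real \<Rightarrow> (('j \<Rightarrow> real) \<times> real) set"
  where "sublevel_system Rows S g e c W =
    Rows \<union> (\<lambda>s. (g s, e s)) ` S \<union> (\<lambda>s. (\<lambda>j. - g s j, - e s)) ` S \<union> {(c, W)}"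

lemma finite_sublevel_system: "finite Rows \<Longrightarrow> finite S \<Longrightarrow> finite (sublevel_system Rows S g e c W)"
  by (simp add: sublevel_system_def)

lemma sublevel_system_solution_iff:
  "(\<forall>r\<in>sublevel_system Rows S g e c W. lin_form J (fst r) z \<le> snd r) \<longleftrightarrow>
     (\<forall>r\<in>Rows. lin_form J (fst r) z \<le> snd r) \<and> (\<forall>s\<in>S. lin_form J (g s) z = e s) \<and> lin_form J c z \<le> W"
  using lin_form_scale_left[of J "- 1" _ z]
  by (auto simp: sublevel_system_def ball_Un intro: order.antisym)

definition lagrange_dominated :: "'j set \<Rightarrow> ('j \<Rightarrow> real) set \<Rightarrow> 's set \<Rightarrow> ('s \<Rightarrow> 'j \<Rightarrow> real)
    \<Rightarrow> ('s \<Rightarrow> real) \<Rightarrow> ('j \<Rightarrow> real) \<Rightarrow> real \<Rightarrow> (('j \<Rightarrow> real) \<times> real) set"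
  where "lagrange_dominated J P S g e c W = {(a, b). \<exists>\<mu> l. 0 \<le> l \<and> (\<forall>z\<in>P.
    lin_form J a z - b \<le> (\<Sum>s\<in>S. \<mu> s * (lin_form J (g s) z - e s)) + l * (lin_form J c z - W))}"

lemma lagrange_dominated_add:
  assumes "(a, b) \<in> lagrange_dominated J P S g e c W" "(a', b') \<in> lagrange_dominated J P S g e c W"
  shows "(\<lambda>j. a j + a' j, b + b') \<in> lagrange_dominated J P S g e c W"
proof -
  obtain \<mu> l \<mu>' l' where "0 \<le> l" "0 \<le> l'"
    and le: "\<forall>z\<in>P. lin_form J a z - b \<le> (\<Sum>s\<in>S. \<mu> s * (lin_form J (g s) z - e s)) + l * (lin_form J c z - W)"
      "\<forall>z\<in>P. lin_form J a' z - b' \<le> (\<Sum>s\<in>S. \<mu>' s * (lin_form J (g s) z - e s)) + l' * (lin_form J c z - W)"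
    using assms unfolding lagrange_dominated_def by blast
  have "lin_form J (\<lambda>j. a j + a' j) z - (b + b')
      \<le> (\<Sum>s\<in>S. (\<mu> s + \<mu>' s) * (lin_form J (g s) z - e s)) + (l + l') * (lin_form J c z - W)"
    if "z \<in> P" for z
    using add_mono[OF le(1)[rule_format, OF that] le(2)[rule_format, OF that]]
    unfolding lin_form_add_left distrib_right sum.distrib by linarith
  then show ?thesis
    unfolding lagrange_dominated_def using \<open>0 \<le> l\<close> \<open>0 \<le> l'\<close>
    by (intro CollectI case_prodI exI[of _ "\<lambda>s. \<mu> s + \<mu>' s"] exI[of _ "l + l'"] conjI ballI) auto
qed

lemma lagrange_dominated_scale:
  assumes "(a, b) \<in> lagrange_dominated J P S g e c W" "0 \<le> k"
  shows "(\<lambda>j. k * a j, k * b) \<in> lagrange_dominated J P S g e c W"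
proof -
  obtain \<mu> l where "0 \<le> l"
    and le: "\<forall>z\<in>P. lin_form J a z - b \<le> (\<Sum>s\<in>S. \<mu> s * (lin_form J (g s) z - e s)) + l * (lin_form J c z - W)"
    using assms unfolding lagrange_dominated_def by blast
  have "lin_form J (\<lambda>j. k * a j) z - k * b
      \<le> (\<Sum>s\<in>S. (k * \<mu> s) * (lin_form J (g s) z - e s)) + (k * l) * (lin_form J c z - W)"
    if "z \<in> P" for z
    using mult_left_mono[OF le[rule_format, OF that] \<open>0 \<le> k\<close>]
    by (simp add: lin_form_scale_left sum_distrib_left algebra_simps)
  then show ?thesis
    unfolding lagrange_dominated_def using \<open>0 \<le> k\<close> \<open>0 \<le> l\<close>
    by (intro CollectI case_prodI exI[of _ "\<lambda>s. k * \<mu> s"] exI[of _ "k * l"] conjI ballI) auto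
qed

lemma sublevel_system_subset_lagrange_dominated:
  assumes "finite S" and rows: "\<And>r z. r \<in> Rows \<Longrightarrow> z \<in> P \<Longrightarrow> lin_form J (fst r) z \<le> snd r"
  shows "sublevel_system Rows S g e c W \<subseteq> lagrange_dominated J P S g e c W"
proof -
  have delta: "(\<Sum>s'\<in>S. (if s' = s then k else 0) * (lin_form J (g s') z - e s'))
      = k * (lin_form J (g s) z - e s)" if "s \<in> S" for s k z
    using that \<open>finite S\<close> by (simp add: if_distrib[of "\<lambda>x. x * _"] sum.delta cong: if_cong)
  have "r \<in> lagrange_dominated J P S g e c W" if "r \<in> Rows" for r
    using rows[OF that] unfolding lagrange_dominated_def
    by (cases r) (auto intro!: exI[of _ "\<lambda>_. 0 :: real"] exI[of _ "0 :: real"])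
  moreover have "(g s, e s) \<in> lagrange_dominated J P S g e c W" if "s \<in> S" for s
    using delta[OF that, of 1] unfolding lagrange_dominated_def
    by (fastforce intro!: exI[of _ "\<lambda>s'. if s' = s then 1 else 0"] exI[of _ "0 :: real"])
  moreover have "(\<lambda>j. - g s j, - e s) \<in> lagrange_dominated J P S g e c W" if "s \<in> S" for s
    using delta[OF that, of "- 1"] lin_form_scale_left[of J "- 1" "g s"] unfolding lagrange_dominated_def
    by (fastforce intro!: exI[of _ "\<lambda>s'. if s' = s then - 1 else 0"] exI[of _ "0 :: real"])
  moreover have "(c, W) \<in> lagrange_dominated J P S g e c W"
    unfolding lagrange_dominated_def by (auto intro!: exI[of _ "\<lambda>_. 0 :: real"] exI[of _ "1 :: real"])
  ultimately show ?thesis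
    unfolding sublevel_system_def by blast
qed

lemma conic_hull_sublevel_system_subset_lagrange_dominated:
  assumes "finite S" and "\<And>r z. r \<in> Rows \<Longrightarrow> z \<in> P \<Longrightarrow> lin_form J (fst r) z \<le> snd r"
  shows "conic_hull (sublevel_system Rows S g e c W) \<subseteq> lagrange_dominated J P S g e c W"
proof (rule conic_hull_minimal)
  show "sublevel_system Rows S g e c W \<subseteq> lagrange_dominated J P S g e c W"
    using assms by (rule sublevel_system_subset_lagrange_dominated)
  show "(\<lambda>_. 0, 0) \<in> lagrange_dominated J P S g e c W"
    unfolding lagrange_dominated_def by (auto intro!: exI[of _ "\<lambda>_. 0 :: real"] exI[of _ "0 :: real"])
qed (blast intro: lagrange_dominated_add lagrange_dominated_scale)+

theorem lagrangian_relaxation_bound: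
  fixes J :: "'j set" and Rows :: "(('j \<Rightarrow> real) \<times> real) set"
    and g :: "'s \<Rightarrow> 'j \<Rightarrow> real" and e :: "'s \<Rightarrow> real"
  defines "P \<equiv> {z. \<forall>r\<in>Rows. lin_form J (fst r) z \<le> snd r}"
  assumes "finite J" "finite Rows" "finite S"
    and z0: "z0 \<in> P" "\<forall>s\<in>S. lin_form J (g s) z0 = e s"
    and bound: "\<And>z. z \<in> P \<Longrightarrow> \<forall>s\<in>S. lin_form J (g s) z = e s \<Longrightarrow> W < lin_form J c z"
  shows "\<exists>\<mu>. \<forall>z\<in>P. W < lin_form J c z + (\<Sum>s\<in>S. \<mu> s * (lin_form J (g s) z - e s))"
proof -
  have "\<not> (\<exists>z. \<forall>r\<in>sublevel_system Rows S g e c W. lin_form J (fst r) z \<le> snd r)"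
    using bound unfolding sublevel_system_solution_iff P_def by force
  then obtain a b where ab: "(a, b) \<in> conic_hull (sublevel_system Rows S g e c W)"
    "\<forall>j\<in>J. a j = 0" "b < 0"
    using farkas_fourier_motzkin[OF \<open>finite J\<close> finite_sublevel_system[OF \<open>finite Rows\<close> \<open>finite S\<close>]]
    by blast
  have rows: "\<And>r z. r \<in> Rows \<Longrightarrow> z \<in> P \<Longrightarrow> lin_form J (fst r) z \<le> snd r"
    unfolding P_def by blast
  have "(a, b) \<in> conic_hull (sublevel_system Rows S g e c W)"
    by (fact ab(1))
  also have "\<dots> \<subseteq> lagrange_dominated J P S g e c W"
    by (rule conic_hull_sublevel_system_subset_lagrange_dominated[OF \<open>finite S\<close> rows])
  finally obtain \<mu> l where "0 \<le> l" and valid: "\<And>z. z \<in> P \<Longrightarrow> lin_form J a z - b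
      \<le> (\<Sum>s\<in>S. \<mu> s * (lin_form J (g s) z - e s)) + l * (lin_form J c z - W)"
    unfolding lagrange_dominated_def by auto
  have "lin_form J a z = 0" for z
    using ab(2) by (simp add: lin_form_def)
  then have gap: "0 < (\<Sum>s\<in>S. \<mu> s * (lin_form J (g s) z - e s)) + l * (lin_form J c z - W)"
    if "z \<in> P" for z
    using valid[OF that] \<open>b < 0\<close> by simp
  \<comment> \<open>The objective row carries positive weight: at the feasible point z0 all residuals vanish.\<close>
  have "(\<Sum>s\<in>S. \<mu> s * (lin_form J (g s) z0 - e s)) = 0"
    using z0(2) by simp
  then have "0 < l"
    using gap[OF z0(1)] \<open>0 \<le> l\<close> by (cases "l = 0") auto
  show ?thesis
  proof (intro exI ballI)
    fix z assume "z \<in> P"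
    have "0 < ((\<Sum>s\<in>S. \<mu> s * (lin_form J (g s) z - e s)) + l * (lin_form J c z - W)) / l"
      using gap[OF \<open>z \<in> P\<close>] \<open>0 < l\<close> by simp
    also have "\<dots> = (\<Sum>s\<in>S. \<mu> s / l * (lin_form J (g s) z - e s)) + (lin_form J c z - W)"
      using \<open>0 < l\<close> by (simp add: add_divide_distrib sum_divide_distrib)
    finally show "W < lin_form J c z + (\<Sum>s\<in>S. \<mu> s / l * (lin_form J (g s) z - e s))"
      by simp
  qed
qed

section \<open>Weak duality\<close>

lemma sum_fun_apply: "(\<Sum>i\<in>I. f i) x = (\<Sum>i\<in>I. f i x)"
  by (induction I rule: infinite_finite_induct) auto

lemma dotn_zero_left [simp]: "dotn k 0 x = 0"
  by (simp add: dotn_def)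

lemma dotn_add_left: "dotn k (a + b) x = dotn k a x + dotn k b x"
  by (simp add: dotn_def sum.distrib distrib_right)

lemma dotn_diff_right: "dotn k a (x - y) = dotn k a x - dotn k a y"
  by (simp add: dotn_def sum_subtractf right_diff_distrib)

lemma dotn_add_right: "dotn k a (x + y) = dotn k a x + dotn k a y"
  by (simp add: dotn_def sum.distrib distrib_left)

lemma dotn_sum_left: "dotn k (\<Sum>i\<in>I. a i) x = (\<Sum>i\<in>I. dotn k (a i) x)"
  unfolding dotn_def sum_fun_apply sum_distrib_right by (rule sum.swap)

lemma dotn_scale_left: "dotn k (\<lambda>j. c * a j) x = c * dotn k a x"
  by (simp add: dotn_def sum_distrib_left mult.assoc)

lemma dotn_mat_vec: "dotn p a (mat_vec p m M y) = dotn m (matT_vec p m M a) y"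
proof -
  have "dotn p a (mat_vec p m M y) = (\<Sum>r<p. \<Sum>j<m. a r * (M r j * y j))"
    by (simp add: dotn_def mat_vec_def sum_distrib_left)
  also have "\<dots> = (\<Sum>j<m. \<Sum>r<p. a r * (M r j * y j))"
    by (rule sum.swap)
  also have "\<dots> = dotn m (matT_vec p m M a) y"
    unfolding dotn_def matT_vec_def by (rule sum.cong) (auto simp: sum_distrib_left mult_ac)
  finally show ?thesis .
qed

lemma mat_vec_vecs: "mat_vec p m M y \<in> vecs p"
  by (simp add: vecs_def mat_vec_def)

lemma vecs_eqI:
  assumes "u \<in> vecs k" "v \<in> vecs k" "\<And>j. j < k \<Longrightarrow> u j = v j"
  shows "u = v"
proof
  fix j
  show "u j = v j" using assms by (cases "j < k") (auto simp: vecs_def)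
qed

lemma polyhedron_subset_vecs: "polyhedron k P \<Longrightarrow> P \<subseteq> vecs k"
  by (auto simp: polyhedron_def)

lemma valf_le_obtains_preimage:
  assumes "valf p m Q d Y w \<le> ereal \<theta>"
  obtains y where "y \<in> Y" "mat_vec p m Q y = w"
proof -
  have "{y \<in> Y. mat_vec p m Q y = w} \<noteq> {}"
  proof
    assume empty: "{y \<in> Y. mat_vec p m Q y = w} = {}"
    have "valf p m Q d Y w = \<infinity>"
      unfolding valf_def empty by (simp add: top_ereal_def)
    with assms show False by simp
  qed
  then show ?thesis using that by blast
qed

lemma sigma_le_at_preimage:
  assumes "y \<in> Y" "mat_vec p m Q y = w"
  shows "sigma m Y (matT_vec p m Q a + (\<lambda>j. c * d j)) \<le> ereal (dotn p a w + c * dotn m d y)"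
proof -
  have "dotn m (matT_vec p m Q a + (\<lambda>j. c * d j)) y = dotn p a w + c * dotn m d y"
    using assms(2) by (simp add: dotn_add_left dotn_scale_left flip: dotn_mat_vec)
  then show ?thesis
    unfolding sigma_def using assms(1) by (metis INF_lower)
qed

lemma sigma_le_sigma_epi:
  assumes "0 \<le> r0"
  shows "sigma m Y (matT_vec p m Q a + (\<lambda>j. r0 * d j)) \<le> sigma_epi p (epi p m Q d Y) a r0"
  unfolding sigma_epi_def
proof (rule INF_greatest)
  let ?\<sigma> = "sigma m Y (matT_vec p m Q a + (\<lambda>j. r0 * d j))"
  fix z assume "z \<in> epi p m Q d Y"
  then obtain w \<theta> where z: "z = (w, \<theta>)" and val: "valf p m Q d Y w \<le> ereal \<theta>"
    by (auto simp: epi_def)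
  note on_preimage = sigma_le_at_preimage[where p = p and m = m and Q = Q and w = w and Y = Y
    and a = a and c = r0 and d = d]
  obtain y0 where y0: "y0 \<in> Y" "mat_vec p m Q y0 = w"
    using val by (rule valf_le_obtains_preimage)
  show "?\<sigma> \<le> ereal (dotn p a (fst z) + r0 * snd z)"
  proof (cases "r0 = 0")
    case True
    then show ?thesis using on_preimage[OF y0] z by simp
  next
    case False
    with assms have "0 < r0" by simp
    show ?thesis
    proof (cases ?\<sigma>)
      case (real s)
      have "ereal ((s - dotn p a w) / r0) \<le> valf p m Q d Y w"
        unfolding valf_def
      proof (rule INF_greatest)
        fix y assume "y \<in> {y \<in> Y. mat_vec p m Q y = w}"
        then have "s \<le> dotn p a w + r0 * dotn m d y"
          using on_preimage real by auto
        then show "ereal ((s - dotn p a w) / r0) \<le> ereal (dotn m d y)"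
          using \<open>0 < r0\<close> by (simp add: pos_divide_le_eq mult.commute)
      qed
      also note val
      finally have "s \<le> dotn p a w + r0 * \<theta>"
        using \<open>0 < r0\<close> by (simp add: pos_divide_le_eq mult.commute)
      then show ?thesis
        using z real by simp
    next
      case PInf
      with on_preimage[OF y0] show ?thesis by simp
    qed simp
  qed
qed

lemma dual_obj_le_cut_value:
  assumes \<rho>0_nonneg: "\<forall>i<t. 0 \<le> \<rho>0 i" and "x \<in> X"
    and cuts: "\<forall>i<t. sigma_epi (p i) (epi (p i) (m i) (Q i) (d i) (Y i)) (\<alpha> i) (\<rho>0 i)
                    \<le> ereal (dotn (p i) (\<alpha> i) (h i - mat_vec (p i) n (T i) x) + \<rho>0 i * \<theta> i)"
  shows "dual_obj n X t p m T Q h d Y \<rho> \<rho>0 \<alpha> \<le> ereal (dotn n \<rho> x + (\<Sum>i<t. \<rho>0 i * \<theta> i))"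
proof -
  let ?aX = "\<rho> + (\<Sum>i<t. matT_vec (p i) n (T i) (\<alpha> i))"
  have "sigma n X ?aX \<le> ereal (dotn n ?aX x)"
    unfolding sigma_def using \<open>x \<in> X\<close> by (rule INF_lower)
  moreover have "(\<Sum>i<t. sigma (m i) (Y i) (matT_vec (p i) (m i) (Q i) (\<alpha> i) + (\<lambda>j. \<rho>0 i * d i j)))
      \<le> (\<Sum>i<t. ereal (dotn (p i) (\<alpha> i) (h i - mat_vec (p i) n (T i) x) + \<rho>0 i * \<theta> i))"
    using sigma_le_sigma_epi \<rho>0_nonneg cuts by (intro sum_mono) (meson lessThan_iff order_trans)
  ultimately have "dual_obj n X t p m T Q h d Y \<rho> \<rho>0 \<alpha>
      \<le> ereal (- (\<Sum>i<t. dotn (p i) (\<alpha> i) (h i))) + ereal (dotn n ?aX x)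
        + (\<Sum>i<t. ereal (dotn (p i) (\<alpha> i) (h i - mat_vec (p i) n (T i) x) + \<rho>0 i * \<theta> i))"
    unfolding dual_obj_def by (intro add_mono) auto
  also have "\<dots> = ereal (dotn n \<rho> x + (\<Sum>i<t. \<rho>0 i * \<theta> i))"
    by (simp add: sum_ereal dotn_add_left dotn_sum_left dotn_diff_right dotn_mat_vec
        sum.distrib sum_subtractf)
  finally show ?thesis .
qed

section \<open>Strong duality\<close>

lemma ereal_le_INF_add:
  fixes f :: "'a \<Rightarrow> real"
  assumes "X \<noteq> {}" and bound: "\<And>x. x \<in> X \<Longrightarrow> ereal (K - f x) \<le> B"
  shows "ereal K \<le> (INF x\<in>X. ereal (f x)) + B"
proof (cases B)
  case (real b)
  have "ereal (K - b) \<le> ereal (f x)" if "x \<in> X" for x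
    using bound[OF that] real by simp
  then have "ereal (K - b) \<le> (INF x\<in>X. ereal (f x))"
    by (rule INF_greatest)
  then show ?thesis
    using real by (cases "INF x\<in>X. ereal (f x)") auto
next
  case MInf
  then show ?thesis using bound \<open>X \<noteq> {}\<close> by fastforce
qed simp

lemma ereal_le_sum_INF:
  fixes g :: "'i \<Rightarrow> 'a \<Rightarrow> real"
  assumes "finite I" "\<And>i. i \<in> I \<Longrightarrow> Y i \<noteq> {}"
    and "\<And>y. \<forall>i\<in>I. y i \<in> Y i \<Longrightarrow> K \<le> (\<Sum>i\<in>I. g i (y i))"
  shows "ereal K \<le> (\<Sum>i\<in>I. INF v\<in>Y i. ereal (g i v))"
  using assms
proof (induction I arbitrary: K rule: finite_induct)
  case empty
  then show ?case by (simp add: zero_ereal_def)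
next
  case (insert j I)
  have "ereal (K - g j v) \<le> (\<Sum>i\<in>I. INF v\<in>Y i. ereal (g i v))" if "v \<in> Y j" for v
  proof (rule insert.IH)
    fix y assume y: "\<forall>i\<in>I. y i \<in> Y i"
    have "(\<Sum>i\<in>I. g i ((y(j := v)) i)) = (\<Sum>i\<in>I. g i (y i))"
      using insert.hyps by (intro sum.cong) auto
    then have "(\<Sum>i\<in>insert j I. g i ((y(j := v)) i)) = g j v + (\<Sum>i\<in>I. g i (y i))"
      using insert.hyps by simp
    moreover have "K \<le> (\<Sum>i\<in>insert j I. g i ((y(j := v)) i))"
      using insert.prems(2)[of "y(j := v)"] y \<open>v \<in> Y j\<close> by auto
    ultimately show "K - g j v \<le> (\<Sum>i\<in>I. g i (y i))" by simp
  qed (use insert.prems in auto)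
  then show ?case
    using ereal_le_INF_add[of "Y j"] insert.prems(1) insert.hyps by simp
qed

definition linking_residual :: "nat \<Rightarrow> (nat \<Rightarrow> nat) \<Rightarrow> (nat \<Rightarrow> nat) \<Rightarrow> (nat \<Rightarrow> nat \<Rightarrow> nat \<Rightarrow> real)
    \<Rightarrow> (nat \<Rightarrow> nat \<Rightarrow> nat \<Rightarrow> real) \<Rightarrow> (nat \<Rightarrow> nat \<Rightarrow> real) \<Rightarrow> (nat \<Rightarrow> real) \<Rightarrow> (nat \<Rightarrow> nat \<Rightarrow> real)
    \<Rightarrow> nat \<Rightarrow> nat \<Rightarrow> real"
  where "linking_residual n p m T Q h x y i =
    mat_vec (p i) n (T i) x + mat_vec (p i) (m i) (Q i) (y i) - h i"

definition lagrangian :: "nat \<Rightarrow> nat \<Rightarrow> (nat \<Rightarrow> nat) \<Rightarrow> (nat \<Rightarrow> nat) \<Rightarrow> (nat \<Rightarrow> nat \<Rightarrow> nat \<Rightarrow> real)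
    \<Rightarrow> (nat \<Rightarrow> nat \<Rightarrow> nat \<Rightarrow> real) \<Rightarrow> (nat \<Rightarrow> nat \<Rightarrow> real) \<Rightarrow> (nat \<Rightarrow> nat \<Rightarrow> real) \<Rightarrow> (nat \<Rightarrow> real)
    \<Rightarrow> (nat \<Rightarrow> real) \<Rightarrow> (nat \<Rightarrow> nat \<Rightarrow> real) \<Rightarrow> (nat \<Rightarrow> real) \<Rightarrow> (nat \<Rightarrow> nat \<Rightarrow> real) \<Rightarrow> real"
  where "lagrangian n t p m T Q h d \<rho> \<rho>0 \<alpha> x y =
    dotn n \<rho> x + (\<Sum>i<t. \<rho>0 i * dotn (m i) (d i) (y i))
    + (\<Sum>i<t. dotn (p i) (\<alpha> i) (linking_residual n p m T Q h x y i))"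

lemma lagrangian_split:
  "lagrangian n t p m T Q h d \<rho> \<rho>0 \<alpha> x y =
    - (\<Sum>i<t. dotn (p i) (\<alpha> i) (h i)) + dotn n (\<rho> + (\<Sum>i<t. matT_vec (p i) n (T i) (\<alpha> i))) x
    + (\<Sum>i<t. dotn (m i) (matT_vec (p i) (m i) (Q i) (\<alpha> i) + (\<lambda>j. \<rho>0 i * d i j)) (y i))"
  by (simp add: lagrangian_def linking_residual_def dotn_add_left dotn_add_right dotn_diff_right dotn_sum_left
      dotn_scale_left dotn_mat_vec sum.distrib sum_subtractf)

lemma le_dual_obj_if_le_lagrangian:
  assumes "X \<noteq> {}" "\<forall>i<t. Y i \<noteq> {}"
    and bound: "\<And>x y. x \<in> X \<Longrightarrow> \<forall>i<t. y i \<in> Y i \<Longrightarrow> K \<le> lagrangian n t p m T Q h d \<rho> \<rho>0 \<alpha> x y"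
  shows "ereal K \<le> dual_obj n X t p m T Q h d Y \<rho> \<rho>0 \<alpha>"
proof -
  define c where "c = - (\<Sum>i<t. dotn (p i) (\<alpha> i) (h i))"
  have "ereal (K - c) \<le> sigma n X (\<rho> + (\<Sum>i<t. matT_vec (p i) n (T i) (\<alpha> i)))
      + (\<Sum>i<t. sigma (m i) (Y i) (matT_vec (p i) (m i) (Q i) (\<alpha> i) + (\<lambda>j. \<rho>0 i * d i j)))"
    unfolding sigma_def
  proof (rule ereal_le_INF_add[OF \<open>X \<noteq> {}\<close>])
    fix x assume "x \<in> X"
    show "ereal (K - c - dotn n (\<rho> + (\<Sum>i<t. matT_vec (p i) n (T i) (\<alpha> i))) x)
      \<le> (\<Sum>i<t. INF v\<in>Y i. ereal (dotn (m i) (matT_vec (p i) (m i) (Q i) (\<alpha> i) + (\<lambda>j. \<rho>0 i * d i j)) v))"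
    proof (rule ereal_le_sum_INF)
      fix y assume "\<forall>i\<in>{..<t}. y i \<in> Y i"
      then have "K \<le> lagrangian n t p m T Q h d \<rho> \<rho>0 \<alpha> x y"
        using bound \<open>x \<in> X\<close> by simp
      then show "K - c - dotn n (\<rho> + (\<Sum>i<t. matT_vec (p i) n (T i) (\<alpha> i))) x
        \<le> (\<Sum>i<t. dotn (m i) (matT_vec (p i) (m i) (Q i) (\<alpha> i) + (\<lambda>j. \<rho>0 i * d i j)) (y i))"
        by (simp add: lagrangian_split c_def)
    qed (use assms(2) in auto)
  qed
  then have "ereal c + ereal (K - c) \<le> dual_obj n X t p m T Q h d Y \<rho> \<rho>0 \<alpha>"
    unfolding dual_obj_def c_def add.assoc by (rule add_left_mono)
  then show ?thesis by simp
qed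

text \<open>The variables (x, y^1, ..., y^t) of the extensive form are packed into one vector
  with coordinates Inl k for x and Inr (i, k) for y^i, so that Farkas' lemma applies to the
  whole system at once.\<close>

definition stack :: "(nat \<Rightarrow> real) \<Rightarrow> (nat \<Rightarrow> nat \<Rightarrow> real) \<Rightarrow> nat + nat \<times> nat \<Rightarrow> real"
  where "stack x y = case_sum x (case_prod y)"

lemma stack_simps [simp]: "stack x y (Inl k) = x k" "stack x y (Inr (i, k)) = y i k"
  by (simp_all add: stack_def)

definition stack_coords :: "nat \<Rightarrow> nat \<Rightarrow> (nat \<Rightarrow> nat) \<Rightarrow> (nat + nat \<times> nat) set"
  where "stack_coords n t m = Inl ` {..<n} \<union> Inr ` (SIGMA i:{..<t}. {..<m i})"

lemma finite_stack_coords: "finite (stack_coords n t m)"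
  by (simp add: stack_coords_def)

definition unstack_x :: "nat \<Rightarrow> (nat + nat \<times> nat \<Rightarrow> real) \<Rightarrow> nat \<Rightarrow> real"
  where "unstack_x n z = (\<lambda>k. if k < n then z (Inl k) else 0)"

definition unstack_y :: "(nat \<Rightarrow> nat) \<Rightarrow> (nat + nat \<times> nat \<Rightarrow> real) \<Rightarrow> nat \<Rightarrow> nat \<Rightarrow> real"
  where "unstack_y m z = (\<lambda>i k. if k < m i then z (Inr (i, k)) else 0)"

lemma unstack_x_vecs: "unstack_x n z \<in> vecs n"
  by (simp add: unstack_x_def vecs_def)

lemma unstack_y_vecs: "unstack_y m z i \<in> vecs (m i)"
  by (simp add: unstack_y_def vecs_def)

lemma unstack_x_stack: "x \<in> vecs n \<Longrightarrow> unstack_x n (stack x y) = x"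
  by (auto simp: unstack_x_def vecs_def)

lemma unstack_y_stack: "y i \<in> vecs (m i) \<Longrightarrow> unstack_y m (stack x y) i = y i"
  by (auto simp: unstack_y_def vecs_def)

lemma lin_form_stack:
  "lin_form (stack_coords n t m) (stack a b) z =
    dotn n a (unstack_x n z) + (\<Sum>i<t. dotn (m i) (b i) (unstack_y m z i))"
proof -
  have "lin_form (stack_coords n t m) (stack a b) z
      = (\<Sum>j\<in>Inl ` {..<n}. stack a b j * z j) + (\<Sum>j\<in>Inr ` (SIGMA i:{..<t}. {..<m i}). stack a b j * z j)"
    unfolding lin_form_def stack_coords_def by (rule sum.union_disjoint) auto
  also have "(\<Sum>j\<in>Inl ` {..<n}. stack a b j * z j) = (\<Sum>k<n. a k * z (Inl k))"
    by (simp add: sum.reindex)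
  also have "(\<Sum>j\<in>Inr ` (SIGMA i:{..<t}. {..<m i}). stack a b j * z j)
      = (\<Sum>(i, k)\<in>(SIGMA i:{..<t}. {..<m i}). b i k * z (Inr (i, k)))"
    by (simp add: sum.reindex case_prod_beta stack_def)
  also have "\<dots> = (\<Sum>i<t. \<Sum>k<m i. b i k * z (Inr (i, k)))"
    by (rule sum.Sigma[symmetric]) auto
  finally show ?thesis
    by (simp add: dotn_def unstack_x_def unstack_y_def)
qed

lemma lin_form_stack_block:
  assumes "i < t"
  shows "lin_form (stack_coords n t m) (stack a (\<lambda>i'. if i' = i then b else 0)) z =
    dotn n a (unstack_x n z) + dotn (m i) b (unstack_y m z i)"
proof -
  have "dotn (m i') (if i' = i then b else 0) y = (if i' = i then dotn (m i') b y else 0)" for i' y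
    by simp
  then show ?thesis
    using assms by (simp add: lin_form_stack sum.delta)
qed

lemma polyhedron_obtains_rows:
  assumes "polyhedron k P"
  obtains R where "finite R" "P = {x \<in> vecs k. \<forall>r\<in>R. dotn k (fst r) x \<le> snd r}"
proof -
  obtain q :: nat and A b where "P = {x \<in> vecs k. \<forall>r<q. dotn k (A r) x \<le> b r}"
    using assms unfolding polyhedron_def by blast
  then have "P = {x \<in> vecs k. \<forall>r\<in>(\<lambda>r. (A r, b r)) ` {..<q}. dotn k (fst r) x \<le> snd r}"
    by (simp only: ball_simps(9) fst_conv snd_conv) (simp only: Ball_def lessThan_iff)
  then show ?thesis using that by blast
qed

lemma polyhedra_obtain_rows:
  assumes "\<forall>i<t. polyhedron (m i) (Y i)"
  obtains RY where "\<forall>i\<in>{..<t}. finite (RY i) \<and>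
    Y i = {y \<in> vecs (m i). \<forall>r\<in>RY i. dotn (m i) (fst r) y \<le> snd r}"
proof -
  have "\<forall>i\<in>{..<t}. \<exists>R. finite R \<and> Y i = {y \<in> vecs (m i). \<forall>r\<in>R. dotn (m i) (fst r) y \<le> snd r}"
  proof
    fix i assume "i \<in> {..<t}"
    then have "polyhedron (m i) (Y i)" using assms by simp
    then show "\<exists>R. finite R \<and> Y i = {y \<in> vecs (m i). \<forall>r\<in>R. dotn (m i) (fst r) y \<le> snd r}"
      by (rule polyhedron_obtains_rows) blast
  qed
  from bchoice[OF this] show ?thesis
    using that by blast
qed

lemma polyhedron_stack:
  assumes "polyhedron n X" "\<forall>i<t. polyhedron (m i) (Y i)"
  obtains Rows where "finite Rows"
    "{z. unstack_x n z \<in> X \<and> (\<forall>i<t. unstack_y m z i \<in> Y i)}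
      = {z. \<forall>r\<in>Rows. lin_form (stack_coords n t m) (fst r) z \<le> snd r}"
proof -
  obtain RX where RX: "finite RX" "X = {x \<in> vecs n. \<forall>r\<in>RX. dotn n (fst r) x \<le> snd r}"
    using assms(1) by (rule polyhedron_obtains_rows)
  obtain RY where RY: "\<forall>i\<in>{..<t}. finite (RY i) \<and>
      Y i = {y \<in> vecs (m i). \<forall>r\<in>RY i. dotn (m i) (fst r) y \<le> snd r}"
    using assms(2) by (rule polyhedra_obtain_rows)
  define Rows where "Rows = (\<lambda>r. (stack (fst r) 0, snd r)) ` RX
    \<union> (\<Union>i\<in>{..<t}. (\<lambda>r. (stack 0 (\<lambda>i'. if i' = i then fst r else 0), snd r)) ` RY i)"
  have x_rows: "unstack_x n z \<in> X \<longleftrightarrow> (\<forall>r\<in>RX. lin_form (stack_coords n t m) (stack (fst r) 0) z \<le> snd r)"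
    for z by (simp add: RX(2) unstack_x_vecs lin_form_stack)
  have y_rows: "unstack_y m z i \<in> Y i \<longleftrightarrow> (\<forall>r\<in>RY i.
      lin_form (stack_coords n t m) (stack 0 (\<lambda>i'. if i' = i then fst r else 0)) z \<le> snd r)"
    if "i < t" for z i
    using RY that by (simp add: unstack_y_vecs lin_form_stack_block)
  have "unstack_x n z \<in> X \<and> (\<forall>i<t. unstack_y m z i \<in> Y i)
      \<longleftrightarrow> (\<forall>r\<in>Rows. lin_form (stack_coords n t m) (fst r) z \<le> snd r)" for z
  proof -
    have "(\<forall>r\<in>Rows. lin_form (stack_coords n t m) (fst r) z \<le> snd r) \<longleftrightarrow>
        (\<forall>r\<in>RX. lin_form (stack_coords n t m) (stack (fst r) 0) z \<le> snd r) \<and>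
        (\<forall>i\<in>{..<t}. \<forall>r\<in>RY i.
          lin_form (stack_coords n t m) (stack 0 (\<lambda>i'. if i' = i then fst r else 0)) z \<le> snd r)"
      unfolding Rows_def by (simp only: ball_Un ball_UN ball_simps(9) fst_conv snd_conv)
    then show ?thesis
      using x_rows y_rows by (simp add: Ball_def)
  qed
  moreover have "finite Rows"
    using RX(1) RY by (simp add: Rows_def)
  ultimately show ?thesis
    using that by blast
qed

lemma linking_eq_iff:
  assumes "h \<in> vecs p"
  shows "mat_vec p m Q y = h - mat_vec p n T x \<longleftrightarrow> (\<forall>s<p. mat_vec p n T x s + mat_vec p m Q y s = h s)"
proof
  assume "\<forall>s<p. mat_vec p n T x s + mat_vec p m Q y s = h s"
  moreover have "h - mat_vec p n T x \<in> vecs p"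
    using assms mat_vec_vecs[of p n T x] by (simp add: vecs_def)
  ultimately show "mat_vec p m Q y = h - mat_vec p n T x"
    by (intro vecs_eqI[OF mat_vec_vecs]) auto
qed auto

lemma Fprime_memI:
  assumes "x \<in> X" "\<forall>i<t. h i \<in> vecs (p i)"
    and "\<forall>i<t. y i \<in> Y i \<and> mat_vec (p i) (m i) (Q i) (y i) = h i - mat_vec (p i) n (T i) x"
  shows "(x, \<lambda>i. if i < t then dotn (m i) (d i) (y i) else 0) \<in> Fprime n X t p m T Q h d Y"
proof -
  have "(h i - mat_vec (p i) n (T i) x, dotn (m i) (d i) (y i)) \<in> epi (p i) (m i) (Q i) (d i) (Y i)"
    if "i < t" for i
  proof -
    have "h i - mat_vec (p i) n (T i) x \<in> vecs (p i)"
      using assms(2) that mat_vec_vecs[of "p i" n "T i" x] by (simp add: vecs_def)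
    moreover have "valf (p i) (m i) (Q i) (d i) (Y i) (h i - mat_vec (p i) n (T i) x)
        \<le> ereal (dotn (m i) (d i) (y i))"
      unfolding valf_def using assms(3) that by (intro INF_lower) auto
    ultimately show ?thesis by (simp add: epi_def)
  qed
  then show ?thesis
    using assms(1) by (simp add: Fprime_def vecs_def)
qed

lemma Fprime_memD:
  assumes "(x, \<theta>) \<in> Fprime n X t p m T Q h d Y"
  shows "x \<in> X" "\<exists>y. \<forall>i<t. y i \<in> Y i \<and> mat_vec (p i) (m i) (Q i) (y i) = h i - mat_vec (p i) n (T i) x"
proof -
  show "x \<in> X" using assms by (simp add: Fprime_def)
  have "\<forall>i\<in>{..<t}. \<exists>yi. yi \<in> Y i \<and> mat_vec (p i) (m i) (Q i) yi = h i - mat_vec (p i) n (T i) x"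
  proof
    fix i assume "i \<in> {..<t}"
    then have "valf (p i) (m i) (Q i) (d i) (Y i) (h i - mat_vec (p i) n (T i) x) \<le> ereal (\<theta> i)"
      using assms by (simp add: Fprime_def epi_def)
    then show "\<exists>yi. yi \<in> Y i \<and> mat_vec (p i) (m i) (Q i) yi = h i - mat_vec (p i) n (T i) x"
      by (rule valf_le_obtains_preimage) blast
  qed
  then show "\<exists>y. \<forall>i<t. y i \<in> Y i \<and> mat_vec (p i) (m i) (Q i) (y i) = h i - mat_vec (p i) n (T i) x"
    by (auto dest!: bchoice)
qed

lemma sigma_F_le_objective:
  assumes "x \<in> X" "\<forall>i<t. h i \<in> vecs (p i)"
    and "\<forall>i<t. y i \<in> Y i \<and> mat_vec (p i) (m i) (Q i) (y i) = h i - mat_vec (p i) n (T i) x"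
  shows "sigma_F n t (Fprime n X t p m T Q h d Y) \<rho> \<rho>0
    \<le> ereal (dotn n \<rho> x + (\<Sum>i<t. \<rho>0 i * dotn (m i) (d i) (y i)))"
  unfolding sigma_F_def using Fprime_memI[OF assms] by (rule INF_lower2) simp

lemma sum_Sigma_multipliers:
  fixes t :: nat
  shows "(\<Sum>q\<in>(SIGMA i:{..<t}. {..<p i}). \<mu> q * F (fst q) (snd q))
    = (\<Sum>i<t. dotn (p i) (\<lambda>s. if s < p i then \<mu> (i, s) else 0) (F i))"
proof -
  have "(\<Sum>(i, s)\<in>(SIGMA i:{..<t}. {..<p i}). \<mu> (i, s) * F i s) = (\<Sum>i<t. \<Sum>s<p i. \<mu> (i, s) * F i s)"
    by (rule sum.Sigma[symmetric]) auto
  then show ?thesis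
    by (simp add: dotn_def split_def)
qed

definition linking_row :: "(nat \<Rightarrow> nat \<Rightarrow> nat \<Rightarrow> real) \<Rightarrow> (nat \<Rightarrow> nat \<Rightarrow> nat \<Rightarrow> real)
    \<Rightarrow> nat \<times> nat \<Rightarrow> nat + nat \<times> nat \<Rightarrow> real"
  where "linking_row T Q = (\<lambda>(i, s). stack (T i s) (\<lambda>i'. if i' = i then Q i s else 0))"

lemma lin_form_linking_row:
  assumes "i < t" "s < p i"
  shows "lin_form (stack_coords n t m) (linking_row T Q (i, s)) z
    = mat_vec (p i) n (T i) (unstack_x n z) s + mat_vec (p i) (m i) (Q i) (unstack_y m z i) s"
  using assms by (simp add: linking_row_def lin_form_stack_block mat_vec_def dotn_def)

lemma linking_rows_iff:
  assumes "\<forall>i<t. h i \<in> vecs (p i)"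
  shows "(\<forall>q\<in>(SIGMA i:{..<t}. {..<p i}). lin_form (stack_coords n t m) (linking_row T Q q) z = case_prod h q)
    \<longleftrightarrow> (\<forall>i<t. mat_vec (p i) (m i) (Q i) (unstack_y m z i) = h i - mat_vec (p i) n (T i) (unstack_x n z))"
  using assms by (auto simp: lin_form_linking_row linking_eq_iff)

lemma sum_linking_rows_stack:
  assumes "x \<in> vecs n" "\<forall>i<t. y i \<in> vecs (m i)"
  shows "(\<Sum>q\<in>(SIGMA i:{..<t}. {..<p i}).
      \<mu> q * (lin_form (stack_coords n t m) (linking_row T Q q) (stack x y) - case_prod h q))
    = (\<Sum>q\<in>(SIGMA i:{..<t}. {..<p i}). \<mu> q * linking_residual n p m T Q h x y (fst q) (snd q))"
  using assms
  by (intro sum.cong) (auto simp: lin_form_linking_row linking_residual_def unstack_x_stack unstack_y_stack)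

lemma lin_form_objective_row:
  "lin_form (stack_coords n t m) (stack \<rho> (\<lambda>i k. \<rho>0 i * d i k)) z
    = dotn n \<rho> (unstack_x n z) + (\<Sum>i<t. \<rho>0 i * dotn (m i) (d i) (unstack_y m z i))"
  by (simp add: lin_form_stack dotn_scale_left)

lemma lin_form_objective_row_stack:
  assumes "x \<in> vecs n" "\<forall>i<t. y i \<in> vecs (m i)"
  shows "lin_form (stack_coords n t m) (stack \<rho> (\<lambda>i k. \<rho>0 i * d i k)) (stack x y)
    = dotn n \<rho> x + (\<Sum>i<t. \<rho>0 i * dotn (m i) (d i) (y i))"
  unfolding lin_form_objective_row using assms
  by (auto simp: unstack_x_stack unstack_y_stack intro!: sum.cong)

lemma linking_multipliers:
  fixes t :: nat
  assumes X_poly: "polyhedron n X" and Y_poly: "\<forall>i<t. polyhedron (m i) (Y i)"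
    and h_dim: "\<forall>i<t. h i \<in> vecs (p i)"
    and x0: "x0 \<in> X" and y0: "\<forall>i<t. y0 i \<in> Y i \<and>
      mat_vec (p i) (m i) (Q i) (y0 i) = h i - mat_vec (p i) n (T i) x0"
    and bound: "\<And>x y. x \<in> X \<Longrightarrow> \<forall>i<t. y i \<in> Y i \<and>
      mat_vec (p i) (m i) (Q i) (y i) = h i - mat_vec (p i) n (T i) x \<Longrightarrow>
      W < dotn n \<rho> x + (\<Sum>i<t. \<rho>0 i * dotn (m i) (d i) (y i))"
  obtains \<mu> where "\<And>x y. x \<in> X \<Longrightarrow> \<forall>i<t. y i \<in> Y i \<Longrightarrow>
    W < dotn n \<rho> x + (\<Sum>i<t. \<rho>0 i * dotn (m i) (d i) (y i))
      + (\<Sum>q\<in>(SIGMA i:{..<t}. {..<p i}). \<mu> q * linking_residual n p m T Q h x y (fst q) (snd q))"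
proof -
  let ?J = "stack_coords n t m" and ?S = "SIGMA i:{..<t}. {..<p i}"
  obtain Rows where "finite Rows" and P: "{z. unstack_x n z \<in> X \<and> (\<forall>i<t. unstack_y m z i \<in> Y i)}
      = {z. \<forall>r\<in>Rows. lin_form ?J (fst r) z \<le> snd r}"
    using polyhedron_stack[OF X_poly Y_poly] by blast
  have vecs: "x \<in> vecs n" "\<forall>i<t. y i \<in> vecs (m i)" if "x \<in> X" "\<forall>i<t. y i \<in> Y i" for x y
    using that polyhedron_subset_vecs X_poly Y_poly by blast+
  have stack_in_P: "stack x y \<in> {z. \<forall>r\<in>Rows. lin_form ?J (fst r) z \<le> snd r}"
    if "x \<in> X" "\<forall>i<t. y i \<in> Y i" for x y
    using that vecs[OF that] unfolding P[symmetric] by (simp add: unstack_x_stack unstack_y_stack)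
  obtain \<mu> where \<mu>: "\<forall>z\<in>{z. \<forall>r\<in>Rows. lin_form ?J (fst r) z \<le> snd r}. W
      < lin_form ?J (stack \<rho> (\<lambda>i k. \<rho>0 i * d i k)) z
        + (\<Sum>q\<in>?S. \<mu> q * (lin_form ?J (linking_row T Q q) z - case_prod h q))"
  proof (atomize_elim, rule lagrangian_relaxation_bound)
    show "stack x0 y0 \<in> {z. \<forall>r\<in>Rows. lin_form ?J (fst r) z \<le> snd r}"
      and "\<forall>q\<in>?S. lin_form ?J (linking_row T Q q) (stack x0 y0) = case_prod h q"
      using x0 y0 stack_in_P vecs[of x0 y0] unfolding linking_rows_iff[OF h_dim]
      by (simp_all add: unstack_x_stack unstack_y_stack)
  next
    fix z assume "z \<in> {z. \<forall>r\<in>Rows. lin_form ?J (fst r) z \<le> snd r}"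
      and "\<forall>q\<in>?S. lin_form ?J (linking_row T Q q) z = case_prod h q"
    then show "W < lin_form ?J (stack \<rho> (\<lambda>i k. \<rho>0 i * d i k)) z"
      unfolding P[symmetric] linking_rows_iff[OF h_dim] lin_form_objective_row by (auto intro: bound)
  qed (simp_all add: finite_stack_coords \<open>finite Rows\<close>)
  show ?thesis
  proof (rule that)
    fix x y assume xy: "x \<in> X" "\<forall>i<t. y i \<in> Y i"
    have "W < lin_form ?J (stack \<rho> (\<lambda>i k. \<rho>0 i * d i k)) (stack x y)
        + (\<Sum>q\<in>?S. \<mu> q * (lin_form ?J (linking_row T Q q) (stack x y) - case_prod h q))"
      using \<mu> stack_in_P[OF xy] by blast
    then show "W < dotn n \<rho> x + (\<Sum>i<t. \<rho>0 i * dotn (m i) (d i) (y i))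
      + (\<Sum>q\<in>?S. \<mu> q * linking_residual n p m T Q h x y (fst q) (snd q))"
      unfolding lin_form_objective_row_stack[OF vecs[OF xy]] sum_linking_rows_stack[OF vecs[OF xy]] .
  qed
qed

lemma lagrangian_bound_near_sigma_F:
  assumes X_poly: "polyhedron n X" and Y_poly: "\<forall>i<t. polyhedron (m i) (Y i)"
    and h_dim: "\<forall>i<t. h i \<in> vecs (p i)"
    and V: "sigma_F n t (Fprime n X t p m T Q h d Y) \<rho> \<rho>0 = ereal V" and "0 < \<epsilon>"
  obtains \<alpha> where "\<forall>i<t. \<alpha> i \<in> vecs (p i)"
    "\<And>x y. x \<in> X \<Longrightarrow> \<forall>i<t. y i \<in> Y i \<Longrightarrow> V - \<epsilon> < lagrangian n t p m T Q h d \<rho> \<rho>0 \<alpha> x y"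
proof -
  have "Fprime n X t p m T Q h d Y \<noteq> {}"
  proof
    assume "Fprime n X t p m T Q h d Y = {}"
    then have "sigma_F n t (Fprime n X t p m T Q h d Y) \<rho> \<rho>0 = \<infinity>"
      unfolding sigma_F_def by (simp add: top_ereal_def)
    with V show False by simp
  qed
  then obtain x0 \<theta>0 where x0: "(x0, \<theta>0) \<in> Fprime n X t p m T Q h d Y"
    by auto
  obtain y0 where y0: "\<forall>i<t. y0 i \<in> Y i \<and> mat_vec (p i) (m i) (Q i) (y0 i) = h i - mat_vec (p i) n (T i) x0"
    using Fprime_memD(2)[OF x0] by blast
  have "V - \<epsilon> < dotn n \<rho> x + (\<Sum>i<t. \<rho>0 i * dotn (m i) (d i) (y i))"
    if "x \<in> X" "\<forall>i<t. y i \<in> Y i \<and> mat_vec (p i) (m i) (Q i) (y i) = h i - mat_vec (p i) n (T i) x"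
    for x y
  proof -
    have "sigma_F n t (Fprime n X t p m T Q h d Y) \<rho> \<rho>0
        \<le> ereal (dotn n \<rho> x + (\<Sum>i<t. \<rho>0 i * dotn (m i) (d i) (y i)))"
      by (rule sigma_F_le_objective[OF that(1) h_dim that(2)])
    then show ?thesis
      using V \<open>0 < \<epsilon>\<close> by simp
  qed
  from linking_multipliers[OF X_poly Y_poly h_dim Fprime_memD(1)[OF x0] y0 this] obtain \<mu>
    where \<mu>: "\<And>x y. x \<in> X \<Longrightarrow> \<forall>i<t. y i \<in> Y i \<Longrightarrow> V - \<epsilon>
      < dotn n \<rho> x + (\<Sum>i<t. \<rho>0 i * dotn (m i) (d i) (y i))
        + (\<Sum>q\<in>(SIGMA i:{..<t}. {..<p i}). \<mu> q * linking_residual n p m T Q h x y (fst q) (snd q))"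
    by blast
  show ?thesis
  proof (rule that)
    show "\<forall>i<t. (\<lambda>s. if s < p i then \<mu> (i, s) else 0) \<in> vecs (p i)"
      by (simp add: vecs_def)
  next
    fix x y assume "x \<in> X" "\<forall>i<t. y i \<in> Y i"
    then show "V - \<epsilon> < lagrangian n t p m T Q h d \<rho> \<rho>0 (\<lambda>i s. if s < p i then \<mu> (i, s) else 0) x y"
      using \<mu> by (simp add: lagrangian_def sum_Sigma_multipliers)
  qed
qed

lemma sigma_F_le_dual_obj_of_maximizer:
  assumes X_poly: "polyhedron n X" and X_ne: "X \<noteq> {}"
    and Y_poly: "\<forall>i<t. polyhedron (m i) (Y i)" and Y_ne: "\<forall>i<t. Y i \<noteq> {}"
    and h_dim: "\<forall>i<t. h i \<in> vecs (p i)"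
    and finite_sigma: "\<bar>sigma_F n t (Fprime n X t p m T Q h d Y) \<rho> \<rho>0\<bar> \<noteq> \<infinity>"
    and \<alpha>hat_opt: "\<forall>\<alpha>. (\<forall>i<t. \<alpha> i \<in> vecs (p i)) \<longrightarrow>
                      dual_obj n X t p m T Q h d Y \<rho> \<rho>0 \<alpha> \<le> dual_obj n X t p m T Q h d Y \<rho> \<rho>0 \<alpha>hat"
  shows "sigma_F n t (Fprime n X t p m T Q h d Y) \<rho> \<rho>0 \<le> dual_obj n X t p m T Q h d Y \<rho> \<rho>0 \<alpha>hat"
proof -
  obtain V where V: "sigma_F n t (Fprime n X t p m T Q h d Y) \<rho> \<rho>0 = ereal V"
    using finite_sigma by (cases "sigma_F n t (Fprime n X t p m T Q h d Y) \<rho> \<rho>0") auto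
  have "ereal V \<le> dual_obj n X t p m T Q h d Y \<rho> \<rho>0 \<alpha>hat"
  proof (rule ereal_le_epsilon2)
    fix \<epsilon> :: real assume "0 < \<epsilon>"
    obtain \<alpha> where \<alpha>_dim: "\<forall>i<t. \<alpha> i \<in> vecs (p i)"
      and bound: "\<And>x y. x \<in> X \<Longrightarrow> \<forall>i<t. y i \<in> Y i \<Longrightarrow> V - \<epsilon> < lagrangian n t p m T Q h d \<rho> \<rho>0 \<alpha> x y"
      using lagrangian_bound_near_sigma_F[OF X_poly Y_poly h_dim V \<open>0 < \<epsilon>\<close>] by blast
    have "ereal (V - \<epsilon>) \<le> dual_obj n X t p m T Q h d Y \<rho> \<rho>0 \<alpha>"
      using X_ne Y_ne bound by (intro le_dual_obj_if_le_lagrangian) (auto intro: less_imp_le)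
    also have "\<dots> \<le> dual_obj n X t p m T Q h d Y \<rho> \<rho>0 \<alpha>hat"
      using \<alpha>hat_opt \<alpha>_dim by blast
    finally show "ereal V \<le> dual_obj n X t p m T Q h d Y \<rho> \<rho>0 \<alpha>hat + ereal \<epsilon>"
      by (cases "dual_obj n X t p m T Q h d Y \<rho> \<rho>0 \<alpha>hat") auto
  qed
  then show ?thesis
    using V by simp
qed

theorem mainTheorem4:
  fixes n t :: nat and p m :: "nat \<Rightarrow> nat"
    and X :: "(nat \<Rightarrow> real) set" and Y :: "nat \<Rightarrow> (nat \<Rightarrow> real) set"
    and T Q :: "nat \<Rightarrow> nat \<Rightarrow> nat \<Rightarrow> real" and h d :: "nat \<Rightarrow> nat \<Rightarrow> real"
    and \<rho> :: "nat \<Rightarrow> real" and \<rho>0 :: "nat \<Rightarrow> real"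
    and \<alpha>hat :: "nat \<Rightarrow> nat \<Rightarrow> real"
  assumes X_poly: "polyhedron n X" and X_ne: "X \<noteq> {}"
    and Y_poly: "\<forall>i<t. polyhedron (m i) (Y i)" and Y_ne: "\<forall>i<t. Y i \<noteq> {}"
    and h_dim: "\<forall>i<t. h i \<in> vecs (p i)" and d_dim: "\<forall>i<t. d i \<in> vecs (m i)"
    and \<rho>_dim: "\<rho> \<in> vecs n" and \<rho>0_nonneg: "\<forall>i<t. 0 \<le> \<rho>0 i"
    and finite_sigma: "\<bar>sigma_F n t (Fprime n X t p m T Q h d Y) \<rho> \<rho>0\<bar> \<noteq> \<infinity>"
    and \<alpha>hat_dim: "\<forall>i<t. \<alpha>hat i \<in> vecs (p i)"
    and \<alpha>hat_opt: "\<forall>\<alpha>. (\<forall>i<t. \<alpha> i \<in> vecs (p i)) \<longrightarrow>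
                      dual_obj n X t p m T Q h d Y \<rho> \<rho>0 \<alpha> \<le> dual_obj n X t p m T Q h d Y \<rho> \<rho>0 \<alpha>hat"
  shows "\<forall>x \<theta>. x \<in> X \<longrightarrow>
           (\<forall>i<t. sigma_epi (p i) (epi (p i) (m i) (Q i) (d i) (Y i)) (\<alpha>hat i) (\<rho>0 i)
                    \<le> ereal (dotn (p i) (\<alpha>hat i) (h i - mat_vec (p i) n (T i) x) + \<rho>0 i * \<theta> i))
           \<longrightarrow> sigma_F n t (Fprime n X t p m T Q h d Y) \<rho> \<rho>0
                 \<le> ereal (dotn n \<rho> x + (\<Sum>i<t. \<rho>0 i * \<theta> i))"
proof (intro allI impI)
  fix x \<theta>
  assume "x \<in> X" and cuts: "\<forall>i<t. sigma_epi (p i) (epi (p i) (m i) (Q i) (d i) (Y i)) (\<alpha>hat i) (\<rho>0 i)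
    \<le> ereal (dotn (p i) (\<alpha>hat i) (h i - mat_vec (p i) n (T i) x) + \<rho>0 i * \<theta> i)"
  have "sigma_F n t (Fprime n X t p m T Q h d Y) \<rho> \<rho>0 \<le> dual_obj n X t p m T Q h d Y \<rho> \<rho>0 \<alpha>hat"
    using X_poly X_ne Y_poly Y_ne h_dim finite_sigma \<alpha>hat_opt by (rule sigma_F_le_dual_obj_of_maximizer)
  also have "\<dots> \<le> ereal (dotn n \<rho> x + (\<Sum>i<t. \<rho>0 i * \<theta> i))"
    using \<rho>0_nonneg \<open>x \<in> X\<close> cuts by (rule dual_obj_le_cut_value)
  finally show "sigma_F n t (Fprime n X t p m T Q h d Y) \<rho> \<rho>0 \<le> ereal (dotn n \<rho> x + (\<Sum>i<t. \<rho>0 i * \<theta> i))" .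
qed

end
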